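(* For every $j\ge0$, $$\left|\frac{\mathbb E(W_j^+)}{K}-\sum_{\ell\ge j}\mathbb Q_\ell\right|\le \mathbb E\!\left(\min(pv_1,1)\,\frac{v_1}{V}\right).$$
   Context: Uniform urn model. Let $v$ be a random variable with values in the positive integers, let $K\ge 1$, let $v_1,\dots,v_K$ be i.i.d. copies of $v$ and $V=v_1+\dots+v_K$. Fix $p\in(0,1)$, with $pV$ assumed to be an integer. Conditionally on $\mathcal F=\{v_1,\dots,v_K\}$, $pV$ balls are drawn with replacement, independently, each drawn ball having color $i$ with probability $v_i/V$. Let $\tilde v_i$ be the number of drawn balls of color $i$, and for $j\ge0$ let $W_j^+=\sum_{i=1}^K\mathbf 1\{\tilde v_i\ge j\}$. Let $\mathbb Q_j=\mathbb E\big(\frac{(pv)^j}{j!}e^{-pv}\big)$, $j\ge0$. *)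

theory Defs
  imports "HOL-Probability.Probability"
begin

text \<open>Law of (v_1,...,v_K): i.i.d. copies of v with law d, indexed 0..K-1
  (so v_1 of the paper is index 0).\<close>
definition iid_vs :: "nat pmf \<Rightarrow> nat \<Rightarrow> (nat \<Rightarrow> nat) pmf" where
  "iid_vs d K = Pi_pmf {..<K} 0 (\<lambda>_. d)"

definition total_V :: "nat \<Rightarrow> (nat \<Rightarrow> nat) \<Rightarrow> nat" where
  "total_V K vs = (\<Sum>i<K. vs i)"

definition urn_color :: "nat \<Rightarrow> (nat \<Rightarrow> nat) \<Rightarrow> nat pmf" where
  "urn_color K vs = pmf_of_multiset (\<Sum>i<K. replicate_mset (vs i) i)"

text \<open>Number of drawn balls, p V (assumed to be an integer).\<close>
definition n_draws :: "real \<Rightarrow> nat \<Rightarrow> (nat \<Rightarrow> nat) \<Rightarrow> nat" where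
  "n_draws p K vs = nat \<lfloor>p * real (total_V K vs)\<rfloor>"

definition urn_draws :: "real \<Rightarrow> nat \<Rightarrow> (nat \<Rightarrow> nat) \<Rightarrow> (nat \<Rightarrow> nat) pmf" where
  "urn_draws p K vs = Pi_pmf {..<n_draws p K vs} 0 (\<lambda>_. urn_color K vs)"

definition urn_experiment :: "nat pmf \<Rightarrow> nat \<Rightarrow> real \<Rightarrow> ((nat \<Rightarrow> nat) \<times> (nat \<Rightarrow> nat)) pmf" where
  "urn_experiment d K p = do { vs \<leftarrow> iid_vs d K; dr \<leftarrow> urn_draws p K vs; return_pmf (vs, dr) }"

definition tilde_v :: "real \<Rightarrow> nat \<Rightarrow> (nat \<Rightarrow> nat) \<Rightarrow> (nat \<Rightarrow> nat) \<Rightarrow> nat \<Rightarrow> nat" where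
  "tilde_v p K vs dr i = card {b. b < n_draws p K vs \<and> dr b = i}"

definition W_plus :: "real \<Rightarrow> nat \<Rightarrow> nat \<Rightarrow> (nat \<Rightarrow> nat) \<Rightarrow> (nat \<Rightarrow> nat) \<Rightarrow> nat" where
  "W_plus p K j vs dr = card {i. i < K \<and> tilde_v p K vs dr i \<ge> j}"

definition Q :: "nat pmf \<Rightarrow> real \<Rightarrow> nat \<Rightarrow> real" where
  "Q d p j = measure_pmf.expectation d (\<lambda>v. (p * real v) ^ j / fact j * exp (- p * real v))"

end

theory Submission
  imports Defs
begin

(* Proof by the Stein-Chen method for Poisson approximation.

   Conditionally on the colour sizes v_1, ..., v_K, each count tilde v_i is
   Binomial(n, q_i) with n = pV draws and success probability q_i = v_i / V, so
   E(W_j^+ | v) = sum_i P(Bin(n, q_i) >= j).  The mean of this binomial is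
   n q_i = p v_i, and the classical Stein-Chen estimate
       |P(Bin(n, q) >= j) - P(Poi(nq) >= j)| <= q (1 - exp (-nq)) <= q min (nq, 1)
   gives for colour i the error min (p v_i, 1) v_i / V.  Averaging over the
   colours, using that E P(Poi(p v_i) >= j) = sum_{l >= j} Q_l and that all
   colours are exchangeable, yields the theorem. *)

definition poi :: "real \<Rightarrow> nat \<Rightarrow> real" where
  "poi lam k = exp (- lam) * lam ^ k / fact k"

definition poi_cdf :: "real \<Rightarrow> nat \<Rightarrow> real" where
  "poi_cdf lam m = (\<Sum>l<m. poi lam l)"

definition poi_tail :: "real \<Rightarrow> nat \<Rightarrow> real" where
  "poi_tail lam m = 1 - poi_cdf lam m"

lemma poi_pos: "lam > 0 \<Longrightarrow> poi lam k > 0"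
  by (simp add: poi_def)

lemma poi_nonneg: "lam \<ge> 0 \<Longrightarrow> poi lam k \<ge> 0"
  by (simp add: poi_def)

lemma poi_Suc: "poi lam (Suc k) = poi lam k * lam / real (Suc k)"
  by (simp add: poi_def field_simps)

lemma poi_pred: "k \<ge> 1 \<Longrightarrow> poi lam k = poi lam (k - 1) * (lam / k)"
  using poi_Suc[of lam "k - 1"] by (cases k) auto

lemma poi_cdf_Suc: "poi_cdf lam (Suc m) = poi_cdf lam m + poi lam m"
  by (simp add: poi_cdf_def)

lemma poi_cdf_nonneg: "lam \<ge> 0 \<Longrightarrow> poi_cdf lam m \<ge> 0"
  unfolding poi_cdf_def by (intro sum_nonneg poi_nonneg)

lemma poi_sums: "(\<lambda>k. poi lam k) sums 1"
proof -
  have "(\<lambda>k. exp (- lam) * (lam ^ k / fact k)) sums (exp (- lam) * exp lam)"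
    using exp_converges[of lam] by (intro sums_mult) (simp add: divide_inverse mult.commute)
  then show ?thesis by (simp add: poi_def exp_minus field_simps)
qed

lemma poi_tail_sums: "(\<lambda>l. poi lam (l + m)) sums poi_tail lam m"
  using sums_iff_shift[of "poi lam" m] poi_sums unfolding poi_tail_def poi_cdf_def by simp

(* Partial sums of the tail series stay between 0 and the tail; used for
   dominated convergence when exchanging the series with an expectation. *)
lemma poi_tail_partial_sum_bounds:
  assumes "lam \<ge> 0"
  shows "0 \<le> (\<Sum>l<N. poi lam (l + m))" "(\<Sum>l<N. poi lam (l + m)) \<le> poi_tail lam m"
proof -
  show "0 \<le> (\<Sum>l<N. poi lam (l + m))" using assms by (intro sum_nonneg poi_nonneg)
  show "(\<Sum>l<N. poi lam (l + m)) \<le> poi_tail lam m"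
    using poi_tail_sums[of lam m] assms
    by (metis sum_le_suminf sums_summable sums_unique poi_nonneg finite_lessThan)
qed

lemma poi_tail_bounds:
  assumes "lam \<ge> 0"
  shows "0 \<le> poi_tail lam m" "poi_tail lam m \<le> 1"
  using poi_tail_partial_sum_bounds[OF assms, where N=m and m=0] poi_cdf_nonneg[OF assms, of m]
  by (auto simp: poi_tail_def poi_cdf_def)

lemma poi_le_1: "lam \<ge> 0 \<Longrightarrow> poi lam k \<le> 1"
  using poi_tail_partial_sum_bounds(2)[where N=1 and m=k] poi_tail_bounds(2)[of lam k]
  by fastforce

(* Consecutive tails decay at least by the factor lam / k, because the
   weight ratios poi (l + 1) / poi l = lam / (l + 1) are at most lam / k. *)
lemma poi_tail_Suc_le:
  assumes "lam \<ge> 0" "k \<ge> 1"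
  shows "poi_tail lam (Suc k) \<le> (lam / k) * poi_tail lam k"
proof -
  have "poi lam (l + Suc k) \<le> (lam / k) * poi lam (l + k)" for l
  proof -
    have "poi lam (l + Suc k) = poi lam (l + k) * (lam / real (Suc (l + k)))"
      by (simp add: poi_Suc)
    also have "\<dots> \<le> poi lam (l + k) * (lam / k)"
      using assms poi_nonneg[of lam "l + k"] by (intro mult_left_mono divide_left_mono) auto
    finally show ?thesis by (simp add: mult.commute)
  qed
  then show ?thesis
    using sums_le[OF _ poi_tail_sums sums_mult[OF poi_tail_sums]] by blast
qed

lemma poi_cdf_Suc_ge:
  assumes "lam \<ge> 0" "k \<ge> 1"
  shows "poi_cdf lam k * (lam / k) \<le> poi_cdf lam (Suc k) - poi lam 0"
proof -
  have "(\<Sum>l<k. poi lam l * (lam / k)) \<le> (\<Sum>l<k. poi lam (Suc l))"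
  proof (intro sum_mono)
    fix l assume "l \<in> {..<k}"
    then show "poi lam l * (lam / k) \<le> poi lam (Suc l)"
      using assms poi_nonneg[of lam l] unfolding poi_Suc
      by (simp add: mult_left_mono divide_left_mono)
  qed
  also have "\<dots> = poi_cdf lam (Suc k) - poi lam 0"
    unfolding poi_cdf_def sum.lessThan_Suc_shift by simp
  finally show ?thesis unfolding poi_cdf_def sum_distrib_right .
qed

lemma poi_cdf_ratio_mono:
  assumes "lam > 0"
  shows "poi_cdf lam (Suc r) / poi lam r \<le> poi_cdf lam (Suc (Suc r)) / poi lam (Suc r)"
proof -
  have "poi_cdf lam (Suc r) / poi lam r = poi_cdf lam (Suc r) * (lam / Suc r) / poi lam (Suc r)"
    using poi_Suc[of lam r] poi_pos[OF assms] assms by (simp add: field_simps)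
  also have "\<dots> \<le> poi_cdf lam (Suc (Suc r)) / poi lam (Suc r)"
    using poi_cdf_Suc_ge[of lam "Suc r"] poi_pos[OF assms, of 0] poi_pos[OF assms, of "Suc r"] assms
    by (intro divide_right_mono) auto
  finally show ?thesis .
qed

(* Solution of the Poisson Stein equation
     lam * g (k + 1) - k * g k = [k = i] - poi lam i
   for the singleton {i}: stein_sol lam i (r + 1) = poi i * stein_num i r / (lam * poi r),
   where stein_num i r = [i <= r] - P(Poi(lam) <= r). *)
definition stein_num :: "real \<Rightarrow> nat \<Rightarrow> nat \<Rightarrow> real" where
  "stein_num lam i m = (if i \<le> m then 1 else 0) - poi_cdf lam (Suc m)"

definition stein_sol :: "real \<Rightarrow> nat \<Rightarrow> nat \<Rightarrow> real" where
  "stein_sol lam i m =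
     (case m of 0 \<Rightarrow> 0 | Suc r \<Rightarrow> poi lam i * stein_num lam i r / (lam * poi lam r))"

lemma stein_sol_Suc: "stein_sol lam i (Suc r) = poi lam i * stein_num lam i r / (lam * poi lam r)"
  by (simp add: stein_sol_def)

lemma stein_sol_factored: "stein_sol lam i (Suc r) = (poi lam i / lam) * (stein_num lam i r / poi lam r)"
  by (simp add: stein_sol_Suc)

lemma stein_num_Suc:
  "stein_num lam i (Suc r) = stein_num lam i r + (if i = Suc r then 1 else 0) - poi lam (Suc r)"
  by (simp add: stein_num_def poi_cdf_Suc)

lemma stein_equation:
  assumes lam: "lam > 0"
  shows "lam * stein_sol lam i (Suc k) - real k * stein_sol lam i k
           = (if k = i then 1 else 0) - poi lam i"
proof -
  have pk: "poi lam k > 0" using poi_pos[OF lam] .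
  have first: "lam * stein_sol lam i (Suc k) = poi lam i * stein_num lam i k / poi lam k"
    using lam by (simp add: stein_sol_Suc)
  show ?thesis
  proof (cases k)
    case 0
    then show ?thesis
      using pk unfolding first by (simp add: stein_num_def poi_cdf_def field_simps)
  next
    case (Suc r)
    have ratio: "real k / (lam * poi lam r) = 1 / poi lam k"
      using poi_pred[of k lam] Suc lam pk poi_pos[OF lam, of r] by (simp add: field_simps)
    have "real k * stein_sol lam i k = (poi lam i * stein_num lam i r) * (real k / (lam * poi lam r))"
      using Suc by (simp add: stein_sol_Suc)
    also have "\<dots> = poi lam i * stein_num lam i r / poi lam k"
      unfolding ratio by simp
    finally have second: "real k * stein_sol lam i k = poi lam i * stein_num lam i r / poi lam k" .
    have "lam * stein_sol lam i (Suc k) - real k * stein_sol lam i k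
        = poi lam i * (stein_num lam i k - stein_num lam i r) / poi lam k"
      unfolding first second by (simp add: right_diff_distrib diff_divide_distrib)
    also have "\<dots> = poi lam i * ((if i = k then 1 else 0) - poi lam k) / poi lam k"
      using Suc by (simp add: stein_num_Suc)
    also have "\<dots> = (if k = i then 1 else 0) - poi lam i"
      using pk by (auto simp: field_simps)
    finally show ?thesis .
  qed
qed

(* Off the diagonal, stein_num i r / poi r decreases in r: for r + 1 < i this
   is the monotone cdf ratio, for r >= i it is the decay of the tails. *)
lemma stein_num_ratio_decreasing:
  assumes lam: "lam > 0" and i: "i \<noteq> Suc r"
  shows "stein_num lam i (Suc r) / poi lam (Suc r) \<le> stein_num lam i r / poi lam r"
proof (cases "i \<le> r")
  case False
  then show ?thesis
    using poi_cdf_ratio_mono[OF lam, of r] i by (simp add: stein_num_def)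
next
  case True
  have pos: "poi lam r > 0" "poi lam (Suc r) > 0" using poi_pos[OF lam] by auto
  have "(1 - poi_cdf lam (Suc (Suc r))) / poi lam (Suc r)
      \<le> ((lam / Suc r) * (1 - poi_cdf lam (Suc r))) / poi lam (Suc r)"
    using poi_tail_Suc_le[of lam "Suc r"] lam pos by (intro divide_right_mono) (auto simp: poi_tail_def)
  also have "\<dots> = (1 - poi_cdf lam (Suc r)) / poi lam r"
    using poi_Suc[of lam r] lam pos by (simp add: field_simps)
  finally show ?thesis using True by (simp add: stein_num_def)
qed

lemma stein_sol_off_diagonal_decreasing:
  assumes "lam > 0" "i \<noteq> Suc r"
  shows "stein_sol lam i (Suc (Suc r)) \<le> stein_sol lam i (Suc r)"
  using stein_num_ratio_decreasing[OF assms] poi_pos[OF assms(1), of i] assms(1)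
  by (simp only: stein_sol_factored) (intro mult_left_mono; simp)

lemma stein_sol_diagonal_increment:
  assumes lam: "lam > 0" and k: "k \<ge> 1"
  shows "stein_sol lam k (Suc k) - stein_sol lam k k \<le> (1 - exp (- lam)) / lam"
proof -
  obtain r where r: "k = Suc r" using k by (cases k) auto
  have pos: "poi lam r > 0" "poi lam k > 0" using poi_pos[OF lam] by auto
  have "stein_sol lam k (Suc k) = (1 - poi_cdf lam (Suc k)) / lam"
    using pos by (simp add: stein_sol_Suc stein_num_def)
  moreover have "stein_sol lam k k = - poi_cdf lam k / k"
  proof -
    have ratio: "poi lam k / (lam * poi lam r) = 1 / k"
      using r poi_pred[OF k, of lam] pos lam by (simp add: field_simps)
    have "stein_sol lam k k = - poi_cdf lam k * (poi lam k / (lam * poi lam r))"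
      using r by (simp add: stein_sol_Suc stein_num_def)
    then show ?thesis unfolding ratio by simp
  qed
  ultimately have "stein_sol lam k (Suc k) - stein_sol lam k k
      = (1 - poi_cdf lam (Suc k) + poi_cdf lam k * (lam / k)) / lam"
    using lam by (simp add: field_simps)
  also have "\<dots> \<le> (1 - poi lam 0) / lam"
    using poi_cdf_Suc_ge[of lam k] lam k by (intro divide_right_mono) auto
  finally show ?thesis by (simp add: poi_def)
qed

lemma sum_stein_sol:
  assumes lam: "lam > 0" and r: "r < N"
  shows "(\<Sum>i<N. stein_sol lam i (Suc r))
           = poi_cdf lam (Suc r) * poi_tail lam N / (lam * poi lam r)"
proof -
  have low: "(\<Sum>i<N. poi lam i * (if i \<le> r then 1 else 0)) = poi_cdf lam (Suc r)"
    unfolding poi_cdf_def by (intro sum.mono_neutral_cong_right) (use r in auto)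
  have total: "(\<Sum>i<N. poi lam i * poi_cdf lam (Suc r)) = poi_cdf lam (Suc r) * poi_cdf lam N"
    unfolding poi_cdf_def[of lam N] sum_distrib_left by (simp add: mult.commute)
  have "(\<Sum>i<N. poi lam i * stein_num lam i r)
      = (\<Sum>i<N. poi lam i * (if i \<le> r then 1 else 0)) - poi_cdf lam (Suc r) * poi_cdf lam N"
    unfolding stein_num_def right_diff_distrib sum_subtractf total ..
  also have "\<dots> = poi_cdf lam (Suc r) * poi_tail lam N"
    unfolding low poi_tail_def by (simp add: algebra_simps)
  finally show ?thesis
    unfolding stein_sol_Suc sum_divide_distrib[symmetric] by simp
qed

lemma sum_stein_sol_increment_nonneg:
  assumes lam: "lam > 0" and k: "k \<ge> 1" "k < N"
  shows "(\<Sum>i<N. stein_sol lam i (Suc k) - stein_sol lam i k) \<ge> 0"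
proof -
  obtain r where r: "k = Suc r" using k by (cases k) auto
  have pos: "poi lam r > 0" "poi lam k > 0" using poi_pos[OF lam] by auto
  have "(\<Sum>i<N. stein_sol lam i (Suc k) - stein_sol lam i k)
      = (poi_tail lam N / lam) * (poi_cdf lam (Suc k) / poi lam k - poi_cdf lam k / poi lam r)"
    using k lam pos unfolding sum_subtractf r
    by (simp add: sum_stein_sol field_simps)
  also have "\<dots> \<ge> 0"
    using poi_cdf_ratio_mono[OF lam, of r] poi_tail_bounds(1)[of lam N] lam r
    by (intro mult_nonneg_nonneg) auto
  finally show ?thesis .
qed

definition tail_stein_sol :: "real \<Rightarrow> nat \<Rightarrow> nat \<Rightarrow> real" where
  "tail_stein_sol lam j k = (\<Sum>i<j. stein_sol lam i k)"

lemma tail_stein_equation: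
  assumes "lam > 0"
  shows "lam * tail_stein_sol lam j (Suc k) - real k * tail_stein_sol lam j k
           = (if k < j then 1 else 0) - poi_cdf lam j"
proof -
  have "lam * tail_stein_sol lam j (Suc k) - real k * tail_stein_sol lam j k
      = (\<Sum>i<j. lam * stein_sol lam i (Suc k) - real k * stein_sol lam i k)"
    by (simp add: tail_stein_sol_def sum_distrib_left sum_subtractf)
  also have "\<dots> = (\<Sum>i<j. (if k = i then 1 else 0) - poi lam i)"
    using stein_equation[OF assms] by simp
  finally show ?thesis by (simp add: sum_subtractf poi_cdf_def)
qed

(* All singleton increments except the
   diagonal one are nonpositive, and partial sums over lower intervals
   containing the diagonal are nonnegative. *)
lemma tail_stein_increment_bound:
  assumes lam: "lam > 0"
  shows "\<bar>tail_stein_sol lam j (Suc (Suc r)) - tail_stein_sol lam j (Suc r)\<bar>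
           \<le> (1 - exp (- lam)) / lam"
proof -
  define k where "k = Suc r"
  define d where "d i = stein_sol lam i (Suc k) - stein_sol lam i k" for i
  define B where "B = (1 - exp (- lam)) / lam"
  have off: "d i \<le> 0" if "i \<noteq> k" for i
    using stein_sol_off_diagonal_decreasing[OF lam] that by (simp add: d_def k_def)
  have diag: "d k \<le> B"
    using stein_sol_diagonal_increment[OF lam] by (simp add: d_def B_def k_def)
  have B: "B \<ge> 0" using lam by (simp add: B_def)
  have at_most_diag: "(\<Sum>i\<in>S. d i) \<le> d k" if "finite S" "k \<in> S" for S
  proof -
    have "(\<Sum>i\<in>S. d i) = d k + (\<Sum>i\<in>S - {k}. d i)" using that by (simp add: sum.remove)
    also have "\<dots> \<le> d k + 0" using off by (intro add_left_mono sum_nonpos) auto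
    finally show ?thesis by simp
  qed
  have nonneg: "(\<Sum>i<N. d i) \<ge> 0" if "k < N" for N
    using sum_stein_sol_increment_nonneg[OF lam, of k N] that by (simp add: d_def k_def)
  have "- B \<le> (\<Sum>i<j. d i) \<and> (\<Sum>i<j. d i) \<le> B"
  proof (cases "k < j")
    case True
    then show ?thesis using nonneg[OF True] at_most_diag[of "{..<j}"] diag B by auto
  next
    case False
    have "(\<Sum>i<Suc k. d i) = (\<Sum>i<j. d i) + (\<Sum>i\<in>{j..<Suc k}. d i)"
      using False sum.atLeastLessThan_concat[of 0 j "Suc k" d] by (simp add: atLeast0LessThan)
    moreover have "(\<Sum>i\<in>{j..<Suc k}. d i) \<le> d k" using False by (intro at_most_diag) auto
    moreover have "(\<Sum>i<j. d i) \<le> 0" using False off by (intro sum_nonpos) auto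
    ultimately show ?thesis using nonneg[of "Suc k"] diag B by auto
  qed
  then show ?thesis
    by (simp add: tail_stein_sol_def d_def B_def k_def sum_subtractf abs_le_iff)
qed

definition binom_weight :: "nat \<Rightarrow> real \<Rightarrow> nat \<Rightarrow> real" where
  "binom_weight n q k = real (n choose k) * q ^ k * (1 - q) ^ (n - k)"

definition binom_tail :: "nat \<Rightarrow> real \<Rightarrow> nat \<Rightarrow> real" where
  "binom_tail n q j = (\<Sum>k\<le>n. binom_weight n q k * (if j \<le> k then 1 else 0))"

lemma binom_weight_sum: "(\<Sum>k\<le>n. binom_weight n q k) = 1"
  using binomial_ring[of q "1 - q" n] by (simp add: binom_weight_def atLeast0AtMost)

lemma binom_weight_nonneg: "0 \<le> q \<Longrightarrow> q \<le> 1 \<Longrightarrow> binom_weight n q k \<ge> 0"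
  by (simp add: binom_weight_def)

(* Pascal recursion: Bin(m + 1, q) is Bin(m, q) plus an independent Bernoulli(q). *)
lemma binom_weight_pascal:
  "binom_weight (Suc m) q k
     = (1 - q) * binom_weight m q k + q * (if k = 0 then 0 else binom_weight m q (k - 1))"
proof (cases k)
  case 0 then show ?thesis by (simp add: binom_weight_def)
next
  case (Suc k')
  show ?thesis
  proof (cases "Suc k' \<le> m")
    case True
    then have "m - k' = Suc (m - Suc k')" by simp
    then show ?thesis using Suc by (simp add: binom_weight_def algebra_simps)
  next
    case False
    then have "m choose Suc k' = 0" "m - k' = 0 \<or> m = k'" by auto
    then show ?thesis using Suc False by (auto simp: binom_weight_def algebra_simps)
  qed
qed

lemma binom_average_Suc:
  "(\<Sum>k\<le>Suc m. binom_weight (Suc m) q k * g k)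
     = (\<Sum>k\<le>m. binom_weight m q k * ((1 - q) * g k + q * g (Suc k)))"
proof -
  have "(\<Sum>k\<le>Suc m. binom_weight (Suc m) q k * g k)
     = (\<Sum>k\<le>Suc m. (1 - q) * (binom_weight m q k * g k)
          + q * ((if k = 0 then 0 else binom_weight m q (k - 1)) * g k))"
    by (intro sum.cong refl) (simp only: binom_weight_pascal algebra_simps)
  also have "\<dots> = (1 - q) * (\<Sum>k\<le>Suc m. binom_weight m q k * g k)
      + q * (\<Sum>k\<le>Suc m. (if k = 0 then 0 else binom_weight m q (k - 1)) * g k)"
    by (simp only: sum.distrib sum_distrib_left)
  also have "(\<Sum>k\<le>Suc m. binom_weight m q k * g k) = (\<Sum>k\<le>m. binom_weight m q k * g k)"
    by (simp add: binom_weight_def)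
  also have "(\<Sum>k\<le>Suc m. (if k = 0 then 0 else binom_weight m q (k - 1)) * g k)
      = (\<Sum>k\<le>m. binom_weight m q k * g (Suc k))"
    by (subst sum.atMost_Suc_shift) simp
  finally show ?thesis
    unfolding sum_distrib_left sum.distrib[symmetric] by (simp add: algebra_simps)
qed

lemma binom_size_bias:
  "(\<Sum>k\<le>Suc m. binom_weight (Suc m) q k * (real k * f k))
     = real (Suc m) * q * (\<Sum>k\<le>m. binom_weight m q k * f (Suc k))"
proof -
  have shifted: "binom_weight (Suc m) q (Suc k) * (real (Suc k) * f (Suc k))
      = real (Suc m) * q * (binom_weight m q k * f (Suc k))" for k
  proof -
    have choose: "real (Suc k) * real (Suc m choose Suc k) = real (Suc m) * real (m choose k)"
      using Suc_times_binomial[of k m] by (metis of_nat_mult)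
    have "binom_weight (Suc m) q (Suc k) * (real (Suc k) * f (Suc k))
        = (real (Suc k) * real (Suc m choose Suc k)) * q ^ Suc k * (1 - q) ^ (m - k) * f (Suc k)"
      by (simp add: binom_weight_def algebra_simps)
    then show ?thesis unfolding choose by (simp add: binom_weight_def algebra_simps)
  qed
  have "(\<Sum>k\<le>Suc m. binom_weight (Suc m) q k * (real k * f k))
      = (\<Sum>k\<le>m. binom_weight (Suc m) q (Suc k) * (real (Suc k) * f (Suc k)))"
    by (subst sum.atMost_Suc_shift) simp
  then show ?thesis unfolding shifted by (simp add: sum_distrib_left)
qed

lemma binom_stein_identity:
  assumes "lam = real (Suc m) * q"
  shows "(\<Sum>k\<le>Suc m. binom_weight (Suc m) q k * (lam * f (Suc k) - real k * f k))
       = lam * q * (\<Sum>k\<le>m. binom_weight m q k * (f (Suc (Suc k)) - f (Suc k)))"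
proof -
  have "(\<Sum>k\<le>Suc m. binom_weight (Suc m) q k * (lam * f (Suc k) - real k * f k))
      = lam * (\<Sum>k\<le>Suc m. binom_weight (Suc m) q k * f (Suc k))
        - (\<Sum>k\<le>Suc m. binom_weight (Suc m) q k * (real k * f k))"
    by (simp add: algebra_simps sum_subtractf sum_distrib_left)
  also have "\<dots> = lam * (\<Sum>k\<le>m. binom_weight m q k * ((1 - q) * f (Suc k) + q * f (Suc (Suc k))))
        - lam * (\<Sum>k\<le>m. binom_weight m q k * f (Suc k))"
    by (subst binom_size_bias, subst binom_average_Suc) (simp add: assms)
  also have "\<dots> = lam * q * (\<Sum>k\<le>m. binom_weight m q k * (f (Suc (Suc k)) - f (Suc k)))"
    by (simp add: algebra_simps sum_subtractf sum_distrib_left sum.distrib)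
  finally show ?thesis .
qed

lemma binom_average_abs_bound:
  assumes "0 \<le> q" "q \<le> 1" and bound: "\<And>k. k \<le> n \<Longrightarrow> \<bar>f k\<bar> \<le> B"
  shows "\<bar>\<Sum>k\<le>n. binom_weight n q k * f k\<bar> \<le> B"
proof -
  have "\<bar>\<Sum>k\<le>n. binom_weight n q k * f k\<bar> \<le> (\<Sum>k\<le>n. binom_weight n q k * \<bar>f k\<bar>)"
    using sum_abs[of "\<lambda>k. binom_weight n q k * f k"] binom_weight_nonneg[OF assms(1,2)]
    by (simp add: abs_mult)
  also have "\<dots> \<le> (\<Sum>k\<le>n. binom_weight n q k * B)"
    using bound binom_weight_nonneg[OF assms(1,2)] by (intro sum_mono mult_left_mono) auto
  also have "\<dots> = B" by (simp add: binom_weight_sum flip: sum_distrib_right)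
  finally show ?thesis .
qed

lemma binom_tail_bounds:
  assumes "0 \<le> q" "q \<le> 1"
  shows "0 \<le> binom_tail n q j" "binom_tail n q j \<le> 1"
proof -
  show "0 \<le> binom_tail n q j"
    unfolding binom_tail_def using binom_weight_nonneg[OF assms] by (intro sum_nonneg) auto
  have "binom_tail n q j \<le> (\<Sum>k\<le>n. binom_weight n q k)"
    unfolding binom_tail_def using binom_weight_nonneg[OF assms] by (intro sum_mono) auto
  then show "binom_tail n q j \<le> 1" by (simp add: binom_weight_sum)
qed

(* Stein-Chen bound for the upper tails of Bin(n, q) and Poi(nq): the
   difference is the Stein operator applied to tail_stein_sol, averaged over
   the binomial, and the binomial Stein identity turns it into an increment. *)
lemma binom_poisson_tail_bound:
  assumes q: "0 < q" "q \<le> 1" and n: "n \<ge> 1"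
  shows "\<bar>binom_tail n q j - poi_tail (real n * q) j\<bar> \<le> q * (1 - exp (- (real n * q)))"
proof -
  obtain m where m: "n = Suc m" using n by (cases n) auto
  define lam where "lam = real n * q"
  define G where "G = tail_stein_sol lam j"
  have lam: "lam > 0" using q n by (simp add: lam_def)
  have "binom_tail n q j - poi_tail lam j
      = - (\<Sum>k\<le>n. binom_weight n q k * ((if k < j then 1 else 0) - poi_cdf lam j))"
  proof -
    have "binom_tail n q j = (\<Sum>k\<le>n. binom_weight n q k * (1 - (if k < j then 1 else 0)))"
      unfolding binom_tail_def by (intro sum.cong refl) auto
    moreover have "(\<Sum>k\<le>n. poi_cdf lam j * binom_weight n q k) = poi_cdf lam j"
      by (simp add: binom_weight_sum flip: sum_distrib_left)
    ultimately show ?thesis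
      by (simp add: poi_tail_def algebra_simps sum_subtractf binom_weight_sum)
  qed
  also have "\<dots> = - (\<Sum>k\<le>n. binom_weight n q k * (lam * G (Suc k) - real k * G k))"
    by (simp add: G_def tail_stein_equation[OF lam])
  also have "\<dots> = - (lam * q * (\<Sum>k\<le>m. binom_weight m q k * (G (Suc (Suc k)) - G (Suc k))))"
    unfolding m by (subst binom_stein_identity) (simp_all add: lam_def m)
  finally have "\<bar>binom_tail n q j - poi_tail lam j\<bar>
      = lam * q * \<bar>\<Sum>k\<le>m. binom_weight m q k * (G (Suc (Suc k)) - G (Suc k))\<bar>"
    using lam q by (simp add: abs_mult)
  also have "\<dots> \<le> lam * q * ((1 - exp (- lam)) / lam)"
    using lam q tail_stein_increment_bound[OF lam]
    by (intro mult_left_mono binom_average_abs_bound) (auto simp: G_def)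
  also have "\<dots> = q * (1 - exp (- lam))" using lam by simp
  finally show ?thesis unfolding lam_def .
qed

lemma pmf_integrable_bounded:
  fixes f :: "'a \<Rightarrow> real"
  assumes "\<And>x. x \<in> set_pmf M \<Longrightarrow> \<bar>f x\<bar> \<le> B"
  shows "integrable (measure_pmf M) f"
  using assms by (intro measure_pmf.integrable_const_bound[where B=B]) (auto simp: AE_measure_pmf_iff)

lemma expectation_bind_pmf_bounded:
  fixes f :: "'b \<Rightarrow> real"
  assumes "\<And>y. \<bar>f y\<bar> \<le> B"
  shows "measure_pmf.expectation (bind_pmf M N) f
           = measure_pmf.expectation M (\<lambda>x. measure_pmf.expectation (N x) f)"
  unfolding measure_pmf_bind
  by (rule integral_bind[where K="count_space UNIV" and B=B and B'=1])
     (auto simp: assms measure_pmf.emeasure_space_1 measure_pmf.prob_space_axioms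
        prob_space_imp_subprob_space space_subprob_algebra
        intro!: measure_pmf.finite_measure_axioms measurable_pmf_measure1)

lemma averaged_deviation_bound:
  fixes M :: "'a pmf" and f g h :: "nat \<Rightarrow> 'a \<Rightarrow> real"
  assumes K: "K > 0"
    and bounded: "\<And>i x. i < K \<Longrightarrow> \<bar>f i x\<bar> \<le> B \<and> \<bar>g i x\<bar> \<le> B \<and> \<bar>h i x\<bar> \<le> B"
    and g: "\<And>i. i < K \<Longrightarrow> measure_pmf.expectation M (g i) = a"
    and h: "\<And>i. i < K \<Longrightarrow> measure_pmf.expectation M (h i) = b"
    and dev: "\<And>i x. i < K \<Longrightarrow> x \<in> set_pmf M \<Longrightarrow> \<bar>f i x - g i x\<bar> \<le> h i x"
  shows "\<bar>(\<Sum>i<K. measure_pmf.expectation M (f i)) / real K - a\<bar> \<le> b"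
proof -
  have int: "integrable M (f i)" "integrable M (g i)" "integrable M (h i)" if "i < K" for i
    using bounded[OF that] by (auto intro: pmf_integrable_bounded)
  have "\<bar>(\<Sum>i<K. measure_pmf.expectation M (f i)) - real K * a\<bar>
      = \<bar>\<Sum>i<K. measure_pmf.expectation M (\<lambda>x. f i x - g i x)\<bar>"
    using int g by (simp add: sum_subtractf)
  also have "\<dots> \<le> (\<Sum>i<K. measure_pmf.expectation M (\<lambda>x. \<bar>f i x - g i x\<bar>))"
    by (rule order_trans[OF sum_abs sum_mono]) (rule integral_abs_bound)
  also have "\<dots> \<le> (\<Sum>i<K. measure_pmf.expectation M (h i))"
    using int dev
    by (intro sum_mono integral_mono_AE) (auto simp: AE_measure_pmf_iff)
  also have "\<dots> = real K * b" using h by simp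
  finally show ?thesis using K by (simp add: field_simps)
qed

lemma member_le_total_V: "i < K \<Longrightarrow> vs i \<le> total_V K vs"
  unfolding total_V_def by (intro member_le_sum) auto

lemma colour_share_bounds:
  assumes "i < K"
  shows "0 \<le> real (vs i) / real (total_V K vs)" "real (vs i) / real (total_V K vs) \<le> 1"
  using member_le_total_V[OF assms, of vs] by (auto simp: divide_le_eq)

lemma urn_color_pmf:
  assumes "total_V K vs > 0" "i < K"
  shows "pmf (urn_color K vs) i = real (vs i) / real (total_V K vs)"
proof -
  define M where "M = (\<Sum>l<K. replicate_mset (vs l) l)"
  have "count M i = (\<Sum>l<K. count (replicate_mset (vs l) l) i)"
    unfolding M_def by (simp add: count_sum)
  also have "\<dots> = (\<Sum>l\<in>{i}. vs l)"
    using assms by (intro sum.mono_neutral_cong_right) auto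
  finally have "count M i = vs i" by simp
  moreover have "size M = total_V K vs" unfolding M_def total_V_def by simp
  moreover have "M \<noteq> {#}" using calculation assms(1) by auto
  ultimately show ?thesis unfolding urn_color_def M_def[symmetric] by simp
qed

lemma indicator_bernoulli:
  "map_pmf (\<lambda>x. x = i) c = bernoulli_pmf (pmf c i)"
proof (rule pmf_eqI)
  fix b :: bool
  have "pmf (map_pmf (\<lambda>x. x = i) c) True = pmf c i"
    by (simp add: pmf_map measure_pmf_single vimage_def)
  moreover have "pmf (map_pmf (\<lambda>x. x = i) c) False = 1 - pmf c i"
  proof -
    have "pmf (map_pmf (\<lambda>x. x = i) c) False = measure_pmf.prob c (UNIV - {i})"
      by (simp add: pmf_map vimage_def Compl_eq_Diff_UNIV[symmetric] Compl_eq)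
    also have "\<dots> = 1 - pmf c i"
      using measure_pmf.prob_compl[of "{i}" c] by (simp add: measure_pmf_single)
    finally show ?thesis .
  qed
  ultimately show "pmf (map_pmf (\<lambda>x. x = i) c) b = pmf (bernoulli_pmf (pmf c i)) b"
    by (cases b) (auto simp: pmf_le_1)
qed

lemma tilde_v_binomial:
  assumes "total_V K vs > 0" "i < K"
  shows "map_pmf (\<lambda>dr. tilde_v p K vs dr i) (urn_draws p K vs)
       = binomial_pmf (n_draws p K vs) (real (vs i) / real (total_V K vs))"
proof -
  define c where "c = urn_color K vs"
  define n where "n = n_draws p K vs"
  have "map_pmf (\<lambda>dr. tilde_v p K vs dr i) (urn_draws p K vs)
      = map_pmf (\<lambda>f. card {x\<in>{..<n}. f x})
          (map_pmf (\<lambda>h. (\<lambda>x. x = i) \<circ> h) (Pi_pmf {..<n} 0 (\<lambda>_. c)))"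
    unfolding pmf.map_comp urn_draws_def c_def n_def tilde_v_def
    by (intro pmf.map_cong refl) (simp add: o_def conj_commute)
  also have "map_pmf (\<lambda>h. (\<lambda>x. x = i) \<circ> h) (Pi_pmf {..<n} 0 (\<lambda>_. c))
      = Pi_pmf {..<n} (0 = i) (\<lambda>_. bernoulli_pmf (pmf c i))"
    by (subst Pi_pmf_map[symmetric]) (auto simp: indicator_bernoulli)
  also have "map_pmf (\<lambda>f. card {x\<in>{..<n}. f x}) \<dots> = binomial_pmf n (pmf c i)"
    by (rule binomial_pmf_altdef'[symmetric]) (auto simp: pmf_le_1)
  finally show ?thesis unfolding c_def n_def urn_color_pmf[OF assms] .
qed

lemma expectation_W_plus_given_sizes:
  assumes "total_V K vs > 0"
  shows "measure_pmf.expectation (urn_draws p K vs) (\<lambda>dr. real (W_plus p K j vs dr))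
     = (\<Sum>i<K. binom_tail (n_draws p K vs) (real (vs i) / real (total_V K vs)) j)"
proof -
  have count: "real (W_plus p K j vs dr) = (\<Sum>i<K. if j \<le> tilde_v p K vs dr i then 1 else 0)" for dr
    unfolding W_plus_def by (simp add: sum.If_cases Collect_conj_eq Int_commute lessThan_def)
  have "measure_pmf.expectation (urn_draws p K vs) (\<lambda>dr. if j \<le> tilde_v p K vs dr i then 1 else 0)
      = binom_tail (n_draws p K vs) (real (vs i) / real (total_V K vs)) j" if i: "i < K" for i
  proof -
    have "measure_pmf.expectation (urn_draws p K vs) (\<lambda>dr. if j \<le> tilde_v p K vs dr i then 1 else 0)
      = measure_pmf.expectation (map_pmf (\<lambda>dr. tilde_v p K vs dr i) (urn_draws p K vs))
          (\<lambda>k. if j \<le> k then 1 else 0 :: real)"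
      by simp
    then show ?thesis
      unfolding tilde_v_binomial[OF assms i] binom_tail_def binom_weight_def
      using colour_share_bounds[OF i, of vs] by (simp add: expectation_binomial_pmf')
  qed
  then show ?thesis
    unfolding count by (subst Bochner_Integration.integral_sum) (auto intro: pmf_integrable_bounded[where B=1])
qed

lemma set_pmf_iid_vs: "vs \<in> set_pmf (iid_vs d K) \<Longrightarrow> i < K \<Longrightarrow> vs i \<in> set_pmf d"
  unfolding iid_vs_def by (auto simp: set_Pi_pmf PiE_dflt_def)

lemma total_V_pos:
  assumes "\<forall>n \<in> set_pmf d. n \<ge> 1" "K \<ge> 1" "vs \<in> set_pmf (iid_vs d K)"
  shows "total_V K vs > 0"
  using member_le_total_V[of 0 K vs] set_pmf_iid_vs[OF assms(3), of 0] assms(1,2) by fastforce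

lemma expectation_W_plus:
  assumes "\<forall>n \<in> set_pmf d. n \<ge> 1" "K \<ge> 1"
  shows "measure_pmf.expectation (urn_experiment d K p) (\<lambda>(vs, dr). real (W_plus p K j vs dr))
       = (\<Sum>i<K. measure_pmf.expectation (iid_vs d K)
            (\<lambda>vs. binom_tail (n_draws p K vs) (real (vs i) / real (total_V K vs)) j))"
proof -
  have W_bound: "W_plus p K j vs dr \<le> K" for vs dr
    unfolding W_plus_def using card_mono[of "{..<K}" "{i. i < K \<and> j \<le> tilde_v p K vs dr i}"]
    by auto
  have two_stage: "urn_experiment d K p
      = bind_pmf (iid_vs d K) (\<lambda>vs. map_pmf (Pair vs) (urn_draws p K vs))"
    unfolding urn_experiment_def map_pmf_def ..
  have "measure_pmf.expectation (urn_experiment d K p) (\<lambda>(vs, dr). real (W_plus p K j vs dr))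
      = measure_pmf.expectation (iid_vs d K)
          (\<lambda>vs. measure_pmf.expectation (urn_draws p K vs) (\<lambda>dr. real (W_plus p K j vs dr)))"
    unfolding two_stage
    by (subst expectation_bind_pmf_bounded[where B="real K"]) (auto simp: W_bound)
  also have "\<dots> = measure_pmf.expectation (iid_vs d K)
      (\<lambda>vs. \<Sum>i<K. binom_tail (n_draws p K vs) (real (vs i) / real (total_V K vs)) j)"
    using expectation_W_plus_given_sizes total_V_pos[OF assms]
    by (intro integral_cong_AE) (auto simp: AE_measure_pmf_iff)
  also have "\<dots> = (\<Sum>i<K. measure_pmf.expectation (iid_vs d K)
      (\<lambda>vs. binom_tail (n_draws p K vs) (real (vs i) / real (total_V K vs)) j))"
  proof (rule Bochner_Integration.integral_sum)
    fix i assume "i \<in> {..<K}"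
    then show "integrable (iid_vs d K)
        (\<lambda>vs. binom_tail (n_draws p K vs) (real (vs i) / real (total_V K vs)) j)"
      using binom_tail_bounds colour_share_bounds
      by (intro pmf_integrable_bounded[where B=1]) (simp add: abs_le_iff)
  qed
  finally show ?thesis .
qed

lemma Q_eq: "Q d p l = measure_pmf.expectation d (\<lambda>v. poi (p * real v) l)"
  unfolding Q_def poi_def by (intro Bochner_Integration.integral_cong refl) (simp add: algebra_simps)

lemma sum_Q_tail:
  assumes "p \<ge> 0"
  shows "(\<Sum>l. Q d p (l + j)) = measure_pmf.expectation d (\<lambda>v. poi_tail (p * real v) j)"
proof -
  have nonneg: "p * real v \<ge> 0" for v using assms by simp
  have partial: "(\<Sum>l<N. Q d p (l + j))
      = measure_pmf.expectation d (\<lambda>v. \<Sum>l<N. poi (p * real v) (l + j))" for N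
    unfolding Q_eq using poi_le_1[OF nonneg] poi_nonneg[OF nonneg]
    by (intro Bochner_Integration.integral_sum[symmetric] pmf_integrable_bounded[where B=1]) auto
  have "(\<lambda>N. measure_pmf.expectation d (\<lambda>v. \<Sum>l<N. poi (p * real v) (l + j)))
          \<longlonglongrightarrow> measure_pmf.expectation d (\<lambda>v. poi_tail (p * real v) j)"
  proof (rule integral_dominated_convergence[where w="\<lambda>_. 1"])
    show "AE v in d. (\<lambda>N. \<Sum>l<N. poi (p * real v) (l + j)) \<longlonglongrightarrow> poi_tail (p * real v) j"
      using poi_tail_sums by (auto simp: sums_def)
    show "AE v in d. norm (\<Sum>l<N. poi (p * real v) (l + j)) \<le> 1" for N
    proof (intro AE_I2)
      fix v
      show "norm (\<Sum>l<N. poi (p * real v) (l + j)) \<le> 1"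
        using poi_tail_partial_sum_bounds[OF nonneg, of v j N] poi_tail_bounds(2)[OF nonneg, of v j]
        by simp
    qed
  qed auto
  then show ?thesis unfolding partial[symmetric] by (intro sums_unique[symmetric]) (simp add: sums_def)
qed

lemma iid_marginal:
  fixes f :: "nat \<Rightarrow> real"
  assumes "i < K"
  shows "measure_pmf.expectation (iid_vs d K) (\<lambda>vs. f (vs i)) = measure_pmf.expectation d f"
proof -
  have "map_pmf (\<lambda>vs. vs i) (iid_vs d K) = d"
    unfolding iid_vs_def using assms by (subst Pi_pmf_component) auto
  then show ?thesis using integral_map_pmf[of "\<lambda>vs. vs i" "iid_vs d K" f] by simp
qed

(* Exchangeability: swapping v_0 and v_i does not change the joint law nor V. *)
lemma iid_exchangeable:
  fixes F :: "nat \<Rightarrow> nat \<Rightarrow> real"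
  assumes "i < K"
  shows "measure_pmf.expectation (iid_vs d K) (\<lambda>vs. F (vs i) (total_V K vs))
       = measure_pmf.expectation (iid_vs d K) (\<lambda>vs. F (vs 0) (total_V K vs))"
proof -
  define h where "h x = (if x = 0 then i else if x = i then 0 else x)" for x
  have bij: "bij_betw h {..<K} {..<K}"
    by (rule bij_betwI[where g=h]) (use assms in \<open>auto simp: h_def\<close>)
  have permuted: "iid_vs d K = map_pmf (\<lambda>vs. vs \<circ> h) (iid_vs d K)"
    unfolding iid_vs_def by (rule Pi_pmf_bij_betw) (use bij assms in \<open>auto simp: h_def\<close>)
  have total: "total_V K (vs \<circ> h) = total_V K vs" for vs
    unfolding total_V_def using sum.reindex_bij_betw[OF bij, of vs] by simp
  have "measure_pmf.expectation (iid_vs d K) (\<lambda>vs. F (vs 0) (total_V K vs))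
      = measure_pmf.expectation (map_pmf (\<lambda>vs. vs \<circ> h) (iid_vs d K)) (\<lambda>vs. F (vs 0) (total_V K vs))"
    by (subst permuted) (rule refl)
  also have "\<dots> = measure_pmf.expectation (iid_vs d K) (\<lambda>vs. F (vs (h 0)) (total_V K vs))"
    by (simp add: total)
  finally show ?thesis by (simp add: h_def)
qed

lemma n_draws_real:
  assumes "p > 0" "p * real (total_V K vs) \<in> \<int>"
  shows "real (n_draws p K vs) = p * real (total_V K vs)"
proof -
  obtain z where z: "p * real (total_V K vs) = of_int z" using assms(2) by (auto elim: Ints_cases)
  have "z \<ge> 0" using z assms(1) by (metis mult_nonneg_nonneg of_int_0_le_iff of_nat_0_le_iff less_imp_le)
  then show ?thesis unfolding n_draws_def z by simp
qed

lemma one_minus_exp_le_min: "x \<ge> 0 \<Longrightarrow> 1 - exp (- x) \<le> min x (1::real)"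
  using exp_ge_add_one_self[of "- x"] by (simp add: min_def)

lemma colour_tail_deviation:
  assumes i: "i < K" "vs i \<ge> 1" and p: "p > 0" and pV: "p * real (total_V K vs) \<in> \<int>"
  shows "\<bar>binom_tail (n_draws p K vs) (real (vs i) / real (total_V K vs)) j
            - poi_tail (p * real (vs i)) j\<bar>
         \<le> min (p * real (vs i)) 1 * real (vs i) / real (total_V K vs)"
proof -
  define V where "V = total_V K vs"
  define n where "n = n_draws p K vs"
  define q where "q = real (vs i) / real V"
  have V: "real V \<ge> real (vs i)" "real V > 0"
    using member_le_total_V[OF i(1), of vs] i(2) by (auto simp: V_def)
  have q: "0 < q" "q \<le> 1" using V i(2) by (auto simp: q_def divide_le_eq)
  have n: "real n = p * real V" unfolding n_def V_def by (rule n_draws_real[OF p pV])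
  then have "n \<ge> 1" using p V by (metis of_nat_0 less_one not_le mult_pos_pos order_less_irrefl)
  moreover have nq: "real n * q = p * real (vs i)" unfolding n q_def using V by simp
  ultimately have "\<bar>binom_tail n q j - poi_tail (p * real (vs i)) j\<bar>
      \<le> q * (1 - exp (- (p * real (vs i))))"
    using binom_poisson_tail_bound[OF q] by metis
  also have "\<dots> \<le> q * min (p * real (vs i)) 1"
    using q p by (intro mult_left_mono one_minus_exp_le_min) auto
  finally show ?thesis by (simp add: q_def n_def V_def mult.commute)
qed

theorem mainTheorem3:
  fixes d :: "nat pmf" and K j :: nat and p :: real
  assumes pos: "\<forall>n \<in> set_pmf d. n \<ge> 1"
    and K: "K \<ge> 1"
    and p: "0 < p" "p < 1"
    and pV_int: "\<forall>vs. (\<forall>i<K. vs i \<in> set_pmf d) \<longrightarrow> p * real (total_V K vs) \<in> \<int>"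
  shows "\<bar>measure_pmf.expectation (urn_experiment d K p)
              (\<lambda>(vs, dr). real (W_plus p K j vs dr)) / real K
           - (\<Sum>l. Q d p (l + j))\<bar>
         \<le> measure_pmf.expectation (iid_vs d K)
              (\<lambda>vs. min (p * real (vs 0)) 1 * real (vs 0) / real (total_V K vs))"
proof -
  define share where "share vs i = real (vs i) / real (total_V K vs)" for vs :: "nat \<Rightarrow> nat" and i
  define f where "f i = (\<lambda>vs. binom_tail (n_draws p K vs) (share vs i) j)" for i :: nat
  define g where "g i = (\<lambda>vs :: nat \<Rightarrow> nat. poi_tail (p * real (vs i)) j)" for i :: nat
  define h where "h i = (\<lambda>vs. min (p * real (vs i)) 1 * share vs i)" for i :: nat
  have "\<bar>(\<Sum>i<K. measure_pmf.expectation (iid_vs d K) (f i)) / real K - (\<Sum>l. Q d p (l + j))\<bar>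
      \<le> measure_pmf.expectation (iid_vs d K) (h 0)"
  proof (rule averaged_deviation_bound)
    fix i vs assume i: "i < K"
    have "0 \<le> share vs i" "share vs i \<le> 1" using colour_share_bounds[OF i] by (auto simp: share_def)
    then show "\<bar>f i vs\<bar> \<le> 1 \<and> \<bar>g i vs\<bar> \<le> 1 \<and> \<bar>h i vs\<bar> \<le> 1"
      using binom_tail_bounds[of "share vs i"] poi_tail_bounds[of "p * real (vs i)" j] p
      by (auto simp: f_def g_def h_def abs_le_iff mult_le_one)
    show "measure_pmf.expectation (iid_vs d K) (g i) = (\<Sum>l. Q d p (l + j))"
      unfolding g_def iid_marginal[OF i, of d "\<lambda>v. poi_tail (p * real v) j"]
      using sum_Q_tail[of p d j] p by simp
    show "measure_pmf.expectation (iid_vs d K) (h i) = measure_pmf.expectation (iid_vs d K) (h 0)"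
      using iid_exchangeable[OF i, of d "\<lambda>v V. min (p * real v) 1 * (real v / real V)"]
      unfolding h_def share_def by simp
    assume "vs \<in> set_pmf (iid_vs d K)"
    then have sizes: "\<forall>l<K. vs l \<in> set_pmf d" using set_pmf_iid_vs by blast
    then have "vs i \<ge> 1" using pos i by blast
    then show "\<bar>f i vs - g i vs\<bar> \<le> h i vs"
      using colour_tail_deviation[OF i _ p(1)] pV_int sizes
      by (simp add: f_def g_def h_def share_def)
  qed (use K in simp)
  then show ?thesis
    by (simp add: expectation_W_plus[OF pos K] f_def h_def share_def)
qed

end
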